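(* Assume (L). Let $\beta\in(0,1/2)$ and let $\nu,\psi$ satisfy $0<\nu\le \frac23(\frac12-\beta)$ and $0<\psi\le\frac{1/2-\beta}{3/2-\beta}$. Let $x\in\mathcal N_\nu$ and let $\tilde H$ be a symmetric matrix with $(1-\psi)H(x)\preceq\tilde H\preceq(1+\psi)H(x)$, and put $p=-\tilde H^{-1}\nabla f(x)$. Then $$f(x+p)\le f(x)+\beta\nabla f(x)^\top p,$$ i.e., the Armijo condition holds with unit stepsize, so in the Algorithm (if $x_t=x$ and $\tilde H_t=\tilde H$) the backtracking line search returns $\mu_t=1$.
   Context: $f:\mathbb{R}^d\to\mathbb{R}$ is twice continuously differentiable with Hessian $H(x)=\nabla^2 f(x)$ satisfying $\lambda_{\min} I\preceq H(x)\preceq \lambda_{\max} I$ for all $x$, where $0<\lambda_{\min}\le\lambda_{\max}$; $x^\star$ is the unique minimizer of $f$ and $H^\star=H(x^\star)$. $\|\cdot\|$ is the Euclidean/spectral norm; $\|v\|_A=\sqrt{v^\top Av}$ for $A\succeq 0$. Lipschitz Hessian assumption (L): $\|H(x)-H(y)\|\le L\|x-y\|$ for all $x,y$. Neighborhood: $\mathcal N_\nu=\{x:\|x-x^\star\|_{H^\star}\le \nu\lambda_{\min}^{3/2}/L\}$. The Algorithm's line search: given direction $p_t$ with $\nabla f(x_t)^\top p_t<0$, $\mu_t=\rho^{j_t}$ with $\rho\in(0,1)$ and $j_t$ the smallest nonnegative integer such that $f(x_t+\mu_tp_t)\le f(x_t)+\mu_t\beta\nabla f(x_t)^\top p_t$.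 *)

theory Defs
  imports "HOL-Analysis.Analysis"
begin

definition loewner_le :: "real^'n^'n \<Rightarrow> real^'n^'n \<Rightarrow> bool" where
  "loewner_le A B \<longleftrightarrow> (\<forall>v. v \<bullet> (A *v v) \<le> v \<bullet> (B *v v))"

definition anorm :: "real^'n^'n \<Rightarrow> real^'n \<Rightarrow> real" where
  "anorm A v = sqrt (v \<bullet> (A *v v))"

definition spec_norm :: "real^'n^'n \<Rightarrow> real" where
  "spec_norm A = onorm (\<lambda>v. A *v v)"

end

theory Submission
  imports Defs
begin

(* With a Lipschitz Hessian, Taylor's theorem bounds f (x + p) by
   f x + g x \<bullet> p + p \<bullet> H x p / 2 + L |p|^3 / 6.  Writing a = - g x \<bullet> p = p \<bullet> Ht p, the
   quadratic term is at most a / (2 (1 - \<psi>)).  For the cubic term, g x = g x - g xs is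
   H \<zeta> (x - xs) for some \<zeta> between xs and x, so Cauchy-Schwarz in the H xs inner product
   bounds a by the local distance of x to the minimizer xs.  In the neighbourhood this gives
   L (1 - \<psi>) |p| \<le> (1 + 3\<nu>/2) \<nu> lmin, which makes the cubic term a small multiple of a. *)

lemma has_real_derivative_along_line:
  fixes f :: "'a::real_normed_vector \<Rightarrow> real"
  assumes "\<And>y. (f has_derivative D y) (at y)"
  shows "((\<lambda>t. f (x + t *\<^sub>R p)) has_real_derivative D (x + t *\<^sub>R p) p) (at t)"
proof -
  have lin: "linear (D (x + t *\<^sub>R p))"
    using assms has_derivative_linear by blast
  have "((\<lambda>t. x + t *\<^sub>R p) has_derivative (\<lambda>s. s *\<^sub>R p)) (at t)"
    by (auto intro!: derivative_eq_intros)
  from has_derivative_compose[OF this assms]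
  show ?thesis
    unfolding has_field_derivative_def
    by (rule has_derivative_eq_rhs) (simp add: fun_eq_iff linear_cmul[OF lin] mult.commute)
qed

lemma abs_inner_matrix_le_spec_norm:
  fixes A :: "real^'n^'n"
  shows "\<bar>u \<bullet> (A *v v)\<bar> \<le> spec_norm A * norm u * norm v"
proof -
  have "\<bar>u \<bullet> (A *v v)\<bar> \<le> norm u * norm (A *v v)" by (rule Cauchy_Schwarz_ineq2)
  also have "\<dots> \<le> norm u * (spec_norm A * norm v)"
    unfolding spec_norm_def
    by (intro mult_left_mono onorm matrix_vector_mul_bounded_linear) simp
  finally show ?thesis by (simp add: ac_simps)
qed

lemma matrix_vector_mul_matrix_inv_pos_def:
  fixes A :: "real^'n^'n"
  assumes "\<And>v. v \<noteq> 0 \<Longrightarrow> 0 < v \<bullet> (A *v v)"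
  shows "A *v (matrix_inv A *v y) = y"
proof -
  have "\<forall>x. A *v x = 0 \<longrightarrow> x = 0" using assms by force
  then have "invertible A"
    using matrix_left_invertible_ker invertible_left_inverse by blast
  then have "A ** matrix_inv A = mat 1"
    unfolding invertible_def matrix_inv_def by (rule someI2_ex) blast
  then show ?thesis
    by (metis matrix_vector_mul_assoc matrix_vector_mul_lid)
qed

lemma psd_form_Cauchy_Schwarz:
  fixes A :: "real^'n^'n"
  assumes sym: "\<And>u v. u \<bullet> (A *v v) = v \<bullet> (A *v u)"
    and psd: "\<And>v. 0 \<le> v \<bullet> (A *v v)"
  shows "\<bar>u \<bullet> (A *v v)\<bar> \<le> anorm A u * anorm A v"
proof -
  define a b c where "a = u \<bullet> (A *v u)" and "b = u \<bullet> (A *v v)" and "c = v \<bullet> (A *v v)"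
  have quadratic_nonneg: "0 \<le> a + 2 * s * b + s\<^sup>2 * c" for s
  proof -
    have "0 \<le> (u + s *\<^sub>R v) \<bullet> (A *v (u + s *\<^sub>R v))" by (rule psd)
    also have "\<dots> = a + s * b + s * (v \<bullet> (A *v u)) + s\<^sup>2 * c"
      by (simp add: a_def b_def c_def matrix_vector_right_distrib matrix_scaleR_vector_ac
          scaleR_matrix_vector_assoc[symmetric] inner_add_left inner_add_right
          power2_eq_square algebra_simps)
    finally show ?thesis using sym[of v u] by (simp add: b_def)
  qed
  have "b\<^sup>2 \<le> a * c"
  proof (cases "c = 0")
    case True
    have "b = 0"
    proof (rule ccontr)
      assume "b \<noteq> 0"
      then show False
        using quadratic_nonneg[of "-(a+1)/(2*b)"] True by (simp add: field_simps)
    qed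
    then show ?thesis using True by simp
  next
    case False
    then have "0 < c" using psd[of v] by (simp add: c_def)
    then show ?thesis
      using quadratic_nonneg[of "-b/c"] by (simp add: field_simps power2_eq_square)
  qed
  then show ?thesis
    using psd[of u] psd[of v]
    by (simp add: anorm_def a_def b_def c_def real_sqrt_mult[symmetric] real_le_rsqrt)
qed

locale lipschitz_hessian =
  fixes f :: "real^'n \<Rightarrow> real"
    and g :: "real^'n \<Rightarrow> real^'n"
    and H :: "real^'n \<Rightarrow> real^'n^'n"
    and L :: real
  assumes gradient: "\<And>y. (f has_derivative (\<lambda>h. g y \<bullet> h)) (at y)"
    and hessian: "\<And>y. (g has_derivative (\<lambda>h. H y *v h)) (at y)"
    and hessian_lipschitz: "\<And>y z. spec_norm (H y - H z) \<le> L * norm (y - z)"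
begin

lemma f_along_line_derivative:
  "((\<lambda>t. f (x + t *\<^sub>R p)) has_real_derivative g (x + t *\<^sub>R p) \<bullet> p) (at t)"
  by (rule has_real_derivative_along_line[OF gradient])

lemma gradient_along_line_derivative:
  "((\<lambda>t. g (x + t *\<^sub>R p) \<bullet> q) has_real_derivative (H (x + t *\<^sub>R p) *v p) \<bullet> q) (at t)"
  by (rule has_real_derivative_along_line) (auto intro!: derivative_eq_intros hessian)

lemma gradient_eq_0_at_minimum:
  assumes "\<And>y. f xs \<le> f y"
  shows "g xs = 0"
proof -
  have "(\<lambda>h. g xs \<bullet> h) = (\<lambda>h. 0)"
    by (rule differential_zero_maxmin[of xs UNIV f]) (use gradient assms in auto)
  then have "g xs \<bullet> g xs = 0" by meson
  then show ?thesis by simp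
qed

lemma lipschitz_const_nonneg: "0 \<le> L"
proof -
  obtain i :: 'n where True by simp
  have "0 \<le> spec_norm (H (axis i 1) - H 0)"
    unfolding spec_norm_def by (rule onorm_pos_le) (rule matrix_vector_mul_bounded_linear)
  also have "\<dots> \<le> L * norm (axis i (1::real) - 0)" by (rule hessian_lipschitz)
  finally show ?thesis by simp
qed

lemma abs_inner_hessian_diff_le:
  "\<bar>u \<bullet> ((H y - H z) *v v)\<bar> \<le> L * norm (y - z) * norm u * norm v"
proof -
  have "\<bar>u \<bullet> ((H y - H z) *v v)\<bar> \<le> spec_norm (H y - H z) * norm u * norm v"
    by (rule abs_inner_matrix_le_spec_norm)
  also have "\<dots> \<le> L * norm (y - z) * norm u * norm v"
    by (intro mult_right_mono hessian_lipschitz) auto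
  finally show ?thesis .
qed

lemma gradient_diff_mean_value:
  obtains \<zeta> where "(g y - g x) \<bullet> p = (H \<zeta> *v (y - x)) \<bullet> p" and "norm (\<zeta> - x) \<le> norm (y - x)"
proof -
  obtain \<tau> where "0 < \<tau>" "\<tau> < 1"
    and "g (x + 1 *\<^sub>R (y - x)) \<bullet> p - g (x + 0 *\<^sub>R (y - x)) \<bullet> p
           = (1 - 0) * ((H (x + \<tau> *\<^sub>R (y - x)) *v (y - x)) \<bullet> p)"
    using MVT2[of 0 1 "\<lambda>t. g (x + t *\<^sub>R (y - x)) \<bullet> p", OF _ gradient_along_line_derivative] by auto
  then show thesis
    by (intro that[of "x + \<tau> *\<^sub>R (y - x)"]) (auto simp: inner_diff_left mult_left_le_one_le)
qed

lemma second_difference_estimate: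
  assumes "0 < t"
  obtains c where "f (y + t *\<^sub>R u + t *\<^sub>R v) - f (y + t *\<^sub>R u) - f (y + t *\<^sub>R v) + f y = t\<^sup>2 * c"
    and "\<bar>c - u \<bullet> (H y *v v)\<bar> \<le> t * (L * (norm u + norm v) * norm u * norm v)"
proof -
  define \<phi> where "\<phi> s = f (y + t *\<^sub>R v + s *\<^sub>R u) - f (y + s *\<^sub>R u)" for s
  have "\<exists>\<sigma>>0. \<sigma> < t \<and> \<phi> t - \<phi> 0
          = (t - 0) * (g (y + t *\<^sub>R v + \<sigma> *\<^sub>R u) \<bullet> u - g (y + \<sigma> *\<^sub>R u) \<bullet> u)"
    unfolding \<phi>_def by (rule MVT2[OF assms]) (intro DERIV_diff f_along_line_derivative)
  then obtain \<sigma> where \<sigma>: "0 < \<sigma>" "\<sigma> < t"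
    and "\<phi> t - \<phi> 0 = t * (g (y + t *\<^sub>R v + \<sigma> *\<^sub>R u) \<bullet> u - g (y + \<sigma> *\<^sub>R u) \<bullet> u)"
    by auto
  then have \<phi>_diff: "\<phi> t - \<phi> 0 = t * ((g (y + \<sigma> *\<^sub>R u + t *\<^sub>R v) - g (y + \<sigma> *\<^sub>R u)) \<bullet> u)"
    by (simp add: inner_diff_left add.commute add.left_commute)
  obtain \<zeta> where \<zeta>: "(g (y + \<sigma> *\<^sub>R u + t *\<^sub>R v) - g (y + \<sigma> *\<^sub>R u)) \<bullet> u = (H \<zeta> *v (t *\<^sub>R v)) \<bullet> u"
    and \<zeta>_near: "norm (\<zeta> - (y + \<sigma> *\<^sub>R u)) \<le> norm (t *\<^sub>R v)"
    by (rule gradient_diff_mean_value[of "y + \<sigma> *\<^sub>R u + t *\<^sub>R v" "y + \<sigma> *\<^sub>R u"]) simp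
  have "norm (\<zeta> - y) \<le> norm (\<zeta> - (y + \<sigma> *\<^sub>R u)) + norm (\<sigma> *\<^sub>R u)"
    using norm_triangle_ineq[of "\<zeta> - (y + \<sigma> *\<^sub>R u)" "\<sigma> *\<^sub>R u"] by (simp add: algebra_simps)
  also have "\<dots> \<le> t * norm v + t * norm u"
    using \<zeta>_near \<sigma> assms by (intro add_mono) (auto intro: mult_right_mono)
  finally have \<zeta>_dist: "norm (\<zeta> - y) \<le> t * (norm u + norm v)" by (simp add: algebra_simps)
  have "\<bar>u \<bullet> (H \<zeta> *v v) - u \<bullet> (H y *v v)\<bar> \<le> L * norm (\<zeta> - y) * norm u * norm v"
    using abs_inner_hessian_diff_le[of u \<zeta> y v]
    by (simp add: matrix_vector_mult_diff_rdistrib inner_diff_right)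
  also have "\<dots> \<le> L * (t * (norm u + norm v)) * norm u * norm v"
    using \<zeta>_dist lipschitz_const_nonneg by (intro mult_right_mono mult_left_mono) auto
  finally have "\<bar>u \<bullet> (H \<zeta> *v v) - u \<bullet> (H y *v v)\<bar> \<le> t * (L * (norm u + norm v) * norm u * norm v)"
    by (simp add: ac_simps)
  moreover have "f (y + t *\<^sub>R u + t *\<^sub>R v) - f (y + t *\<^sub>R u) - f (y + t *\<^sub>R v) + f y
                   = t\<^sup>2 * (u \<bullet> (H \<zeta> *v v))"
    using \<phi>_diff \<zeta>
    by (simp add: \<phi>_def algebra_simps power2_eq_square inner_commute
        matrix_scaleR_vector_ac scaleR_matrix_vector_assoc[symmetric])
  ultimately show thesis by (rule that[rotated])
qed

(* Schwarz's theorem: the second difference is symmetric in u and v. *)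
lemma hessian_symmetric: "u \<bullet> (H y *v v) = v \<bullet> (H y *v u)"
proof -
  define C where "C = L * (norm u + norm v) * norm u * norm v"
  have C: "0 \<le> C" using lipschitz_const_nonneg by (simp add: C_def)
  have C_swap: "L * (norm v + norm u) * norm v * norm u = C" by (simp add: C_def ac_simps)
  have asym_small: "\<bar>u \<bullet> (H y *v v) - v \<bullet> (H y *v u)\<bar> \<le> 2 * t * C" if t: "0 < t" for t
  proof -
    obtain c1 where c1: "f (y + t *\<^sub>R u + t *\<^sub>R v) - f (y + t *\<^sub>R u) - f (y + t *\<^sub>R v) + f y = t\<^sup>2 * c1"
      and "\<bar>c1 - u \<bullet> (H y *v v)\<bar> \<le> t * C"
      using second_difference_estimate[OF t] unfolding C_def by blast
    moreover obtain c2 where c2: "f (y + t *\<^sub>R v + t *\<^sub>R u) - f (y + t *\<^sub>R v) - f (y + t *\<^sub>R u) + f y = t\<^sup>2 * c2"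
      and "\<bar>c2 - v \<bullet> (H y *v u)\<bar> \<le> t * C"
      using second_difference_estimate[OF t, of y v u] unfolding C_swap by blast
    moreover have "c1 = c2"
      using c1 c2 t by (simp add: algebra_simps)
    ultimately show ?thesis by (simp add: abs_le_iff)
  qed
  have "\<bar>u \<bullet> (H y *v v) - v \<bullet> (H y *v u)\<bar> \<le> 0"
  proof (rule field_le_epsilon)
    fix e :: real
    assume e: "0 < e"
    have "2 * (e / (2 * C + 1)) * C \<le> e" using e C by (simp add: field_simps)
    then show "\<bar>u \<bullet> (H y *v v) - v \<bullet> (H y *v u)\<bar> \<le> 0 + e"
      using asym_small[of "e / (2 * C + 1)"] e C by simp
  qed
  then show ?thesis by simp
qed

lemma cubic_upper_bound:
  "f (x + p) \<le> f x + g x \<bullet> p + p \<bullet> (H x *v p) / 2 + L * norm p ^ 3 / 6"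
proof -
  define Q where "Q = p \<bullet> (H x *v p)"
  define P where "P = norm p"
  define k1 where "k1 t = g (x + t *\<^sub>R p) \<bullet> p - g x \<bullet> p - t * Q - L * t\<^sup>2 * P ^ 3 / 2" for t
  define k0 where "k0 t = f (x + t *\<^sub>R p) - f x - t * (g x \<bullet> p) - t\<^sup>2 * Q / 2 - L * t ^ 3 * P ^ 3 / 6"
    for t
  have dk1: "(k1 has_real_derivative ((H (x + t *\<^sub>R p) *v p) \<bullet> p - Q - L * t * P ^ 3)) (at t)" for t
    unfolding k1_def
    by (auto intro!: derivative_eq_intros gradient_along_line_derivative simp: power2_eq_square)
  have dk0: "(k0 has_real_derivative k1 t) (at t)" for t
    unfolding k0_def k1_def
    by (auto intro!: derivative_eq_intros f_along_line_derivative
        simp: power2_eq_square power3_eq_cube field_simps)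
  have k1_nonpos: "k1 t \<le> 0" if t: "0 \<le> t" for t
  proof -
    have "k1 t \<le> k1 0"
    proof (rule DERIV_nonpos_imp_nonincreasing[OF t])
      fix s
      assume s: "0 \<le> s" "s \<le> t"
      have "(H (x + s *\<^sub>R p) *v p) \<bullet> p - Q = p \<bullet> ((H (x + s *\<^sub>R p) - H x) *v p)"
        by (simp add: Q_def matrix_vector_mult_diff_rdistrib inner_diff_right inner_commute)
      also have "\<dots> \<le> L * (s * P) * P * P"
        using abs_inner_hessian_diff_le[of p "x + s *\<^sub>R p" x p] s by (simp add: P_def)
      finally have "(H (x + s *\<^sub>R p) *v p) \<bullet> p - Q - L * s * P ^ 3 \<le> 0"
        by (simp add: power3_eq_cube algebra_simps)
      then show "\<exists>y. (k1 has_real_derivative y) (at s) \<and> y \<le> 0" using dk1 by blast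
    qed
    then show ?thesis by (simp add: k1_def)
  qed
  have "k0 1 \<le> k0 0"
    by (rule DERIV_nonpos_imp_nonincreasing) (use dk0 k1_nonpos in auto)
  then show ?thesis by (simp add: k0_def Q_def P_def)
qed

end

locale strongly_convex_lipschitz_hessian = lipschitz_hessian f g H L
  for f :: "real^'n \<Rightarrow> real" and g H L +
  fixes lmin :: real
  assumes lmin_pos: "0 < lmin"
    and hessian_lower: "\<And>y v. lmin * (v \<bullet> v) \<le> v \<bullet> (H y *v v)"
begin

lemma hessian_psd: "0 \<le> v \<bullet> (H y *v v)"
  using hessian_lower[of v y] lmin_pos by (smt (verit) inner_ge_zero mult_nonneg_nonneg)

lemma sqrt_lmin_mult_norm_le_anorm: "sqrt lmin * norm v \<le> anorm (H y) v"
  using hessian_lower[of v y] lmin_pos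
  by (simp add: anorm_def real_le_rsqrt power_mult_distrib dot_square_norm)

lemma abs_inner_hessian_le_anorm: "\<bar>u \<bullet> (H y *v v)\<bar> \<le> anorm (H y) u * anorm (H y) v"
  by (rule psd_form_Cauchy_Schwarz[OF hessian_symmetric hessian_psd])

context
  fixes x xs p :: "real^'n" and Ht :: "real^'n^'n" and k \<nu> :: real
  assumes stationary: "g xs = 0"
    and k_pos: "0 < k"
    and model_lower: "\<And>v. k * (v \<bullet> (H x *v v)) \<le> v \<bullet> (Ht *v v)"
    and newton_step: "Ht *v p = - g x"
    and nu_nonneg: "0 \<le> \<nu>"
    and near_minimizer: "L * anorm (H xs) (x - xs) \<le> \<nu> * lmin powr (3/2)"
begin

lemma decrement_eq: "- (g x \<bullet> p) = p \<bullet> (Ht *v p)"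
  by (simp add: newton_step inner_commute)

lemma quadratic_le_decrement: "k * (p \<bullet> (H x *v p)) \<le> - (g x \<bullet> p)"
  using model_lower[of p] by (simp add: decrement_eq)

lemma norm_sq_le_decrement: "k * lmin * (norm p)\<^sup>2 \<le> - (g x \<bullet> p)"
proof -
  have "k * lmin * (norm p)\<^sup>2 = k * (lmin * (p \<bullet> p))" by (simp add: dot_square_norm)
  also have "\<dots> \<le> k * (p \<bullet> (H x *v p))" using hessian_lower k_pos by simp
  also have "\<dots> \<le> - (g x \<bullet> p)" by (rule quadratic_le_decrement)
  finally show ?thesis .
qed

lemma lipschitz_mult_dist_le: "L * norm (x - xs) \<le> \<nu> * lmin"
proof -
  have m: "0 < sqrt lmin" "lmin powr (3/2) = lmin * sqrt lmin"
    using lmin_pos powr_add[of lmin 1 "1/2"] by (auto simp: powr_half_sqrt)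
  have "sqrt lmin * (L * norm (x - xs)) = L * (sqrt lmin * norm (x - xs))" by simp
  also have "\<dots> \<le> L * anorm (H xs) (x - xs)"
    using sqrt_lmin_mult_norm_le_anorm lipschitz_const_nonneg by (rule mult_left_mono)
  also have "\<dots> \<le> sqrt lmin * (\<nu> * lmin)" using near_minimizer m by (simp add: ac_simps)
  finally show ?thesis using m by simp
qed

lemma anorm_step_sq_le: "k * (anorm (H xs) p)\<^sup>2 \<le> (1 + \<nu>) * - (g x \<bullet> p)"
proof -
  have "(anorm (H xs) p)\<^sup>2 = p \<bullet> (H x *v p) + p \<bullet> ((H xs - H x) *v p)"
    using hessian_psd by (simp add: anorm_def matrix_vector_mult_diff_rdistrib inner_diff_right)
  also have "\<dots> \<le> p \<bullet> (H x *v p) + L * norm (x - xs) * (norm p)\<^sup>2"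
    using abs_inner_hessian_diff_le[of p xs x p]
    by (simp add: norm_minus_commute power2_eq_square ac_simps)
  finally have "k * (anorm (H xs) p)\<^sup>2 \<le> k * (p \<bullet> (H x *v p) + L * norm (x - xs) * (norm p)\<^sup>2)"
    using k_pos by (intro mult_left_mono) auto
  also have "\<dots> = k * (p \<bullet> (H x *v p)) + L * norm (x - xs) * (k * (norm p)\<^sup>2)"
    by (simp add: algebra_simps)
  also have "\<dots> \<le> - (g x \<bullet> p) + \<nu> * lmin * (k * (norm p)\<^sup>2)"
    using quadratic_le_decrement lipschitz_mult_dist_le k_pos
    by (intro add_mono mult_right_mono) auto
  also have "\<dots> \<le> - (g x \<bullet> p) + \<nu> * - (g x \<bullet> p)"
    using mult_left_mono[OF norm_sq_le_decrement nu_nonneg] by (simp add: ac_simps)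
  finally show ?thesis by (simp add: algebra_simps)
qed

lemma decrement_le:
  "- (g x \<bullet> p) \<le> anorm (H xs) p * anorm (H xs) (x - xs)
                    + \<nu> * sqrt lmin * anorm (H xs) (x - xs) * norm p"
proof -
  obtain \<zeta> where \<zeta>: "(g x - g xs) \<bullet> p = (H \<zeta> *v (x - xs)) \<bullet> p"
    and \<zeta>_near: "norm (\<zeta> - xs) \<le> norm (x - xs)"
    by (rule gradient_diff_mean_value)
  have "- (g x \<bullet> p) = - (p \<bullet> (H xs *v (x - xs))) - p \<bullet> ((H \<zeta> - H xs) *v (x - xs))"
    using \<zeta> stationary
    by (simp add: inner_commute matrix_vector_mult_diff_rdistrib inner_diff_right)
  also have "\<dots> \<le> anorm (H xs) p * anorm (H xs) (x - xs) + L * norm (\<zeta> - xs) * norm p * norm (x - xs)"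
    using abs_inner_hessian_le_anorm[of p xs "x - xs"] abs_inner_hessian_diff_le[of p \<zeta> xs "x - xs"]
    by linarith
  also have "L * norm (\<zeta> - xs) * norm p * norm (x - xs) \<le> \<nu> * lmin * norm p * norm (x - xs)"
    using \<zeta>_near lipschitz_const_nonneg lipschitz_mult_dist_le
    by (intro mult_right_mono) (auto intro: order.trans[OF mult_left_mono])
  also have "\<dots> = \<nu> * sqrt lmin * norm p * (sqrt lmin * norm (x - xs))"
    using lmin_pos by simp
  also have "\<dots> \<le> \<nu> * sqrt lmin * norm p * anorm (H xs) (x - xs)"
    using nu_nonneg lmin_pos sqrt_lmin_mult_norm_le_anorm by (intro mult_left_mono) auto
  finally show ?thesis by (simp add: ac_simps)
qed

lemma newton_decrement_le: "sqrt (k * - (g x \<bullet> p)) \<le> (1 + 3/2 * \<nu>) * anorm (H xs) (x - xs)"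
proof -
  define a r where "a = - (g x \<bullet> p)" and "r = anorm (H xs) (x - xs)"
  have a: "0 \<le> a" using norm_sq_le_decrement k_pos lmin_pos a_def
    by (smt (verit) mult_nonneg_nonneg zero_le_power2)
  have r: "0 \<le> r" using hessian_psd by (simp add: r_def anorm_def)
  have anorm_le: "sqrt k * anorm (H xs) p \<le> (1 + \<nu>/2) * sqrt a"
  proof (rule power2_le_imp_le)
    have "(sqrt k * anorm (H xs) p)\<^sup>2 \<le> (1 + \<nu>) * a"
      using anorm_step_sq_le k_pos by (simp add: power_mult_distrib a_def)
    also have "\<dots> \<le> ((1 + \<nu>/2) * sqrt a)\<^sup>2"
      using a nu_nonneg by (simp add: power_mult_distrib power2_eq_square algebra_simps)
    finally show "(sqrt k * anorm (H xs) p)\<^sup>2 \<le> ((1 + \<nu>/2) * sqrt a)\<^sup>2" .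
  qed (use nu_nonneg a in simp)
  have norm_le: "sqrt k * sqrt lmin * norm p \<le> sqrt a"
    using norm_sq_le_decrement k_pos lmin_pos
    by (simp add: a_def real_le_rsqrt power_mult_distrib real_sqrt_mult[symmetric])
  have "sqrt a * (sqrt k * sqrt a) = sqrt k * a" using a by simp
  also have "\<dots> \<le> r * (sqrt k * anorm (H xs) p) + \<nu> * r * (sqrt k * sqrt lmin * norm p)"
    using mult_left_mono[OF decrement_le, of "sqrt k"] k_pos by (simp add: a_def r_def algebra_simps)
  also have "\<dots> \<le> r * ((1 + \<nu>/2) * sqrt a) + \<nu> * r * sqrt a"
    using anorm_le norm_le r nu_nonneg by (intro add_mono mult_left_mono) auto
  also have "\<dots> = sqrt a * ((1 + 3/2 * \<nu>) * r)" by (simp add: algebra_simps)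
  finally have "sqrt a * (sqrt k * sqrt a) \<le> sqrt a * ((1 + 3/2 * \<nu>) * r)" .
  then have "sqrt k * sqrt a \<le> (1 + 3/2 * \<nu>) * r \<or> a = 0"
    using a by (auto simp: mult_le_cancel_left)
  then have "sqrt k * sqrt a \<le> (1 + 3/2 * \<nu>) * r"
    using r nu_nonneg by auto
  then show ?thesis by (simp only: a_def r_def real_sqrt_mult)
qed

lemma lipschitz_step_le: "L * k * norm p \<le> (1 + 3/2 * \<nu>) * \<nu> * lmin"
proof -
  have "sqrt lmin * (L * k * norm p) = L * sqrt k * (sqrt k * sqrt lmin * norm p)"
    using k_pos by (simp add: algebra_simps)
  also have "\<dots> \<le> L * sqrt k * sqrt (- (g x \<bullet> p))"
    using norm_sq_le_decrement k_pos lmin_pos lipschitz_const_nonneg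
    by (intro mult_left_mono) (auto simp: real_le_rsqrt power_mult_distrib real_sqrt_mult[symmetric])
  also have "\<dots> = L * sqrt (k * - (g x \<bullet> p))" by (simp only: real_sqrt_mult mult.assoc)
  also have "\<dots> \<le> L * ((1 + 3/2 * \<nu>) * anorm (H xs) (x - xs))"
    using newton_decrement_le lipschitz_const_nonneg by (rule mult_left_mono)
  also have "\<dots> \<le> (1 + 3/2 * \<nu>) * (\<nu> * lmin powr (3/2))"
    using near_minimizer nu_nonneg by (simp add: mult.left_commute[of L])
  also have "\<dots> = sqrt lmin * ((1 + 3/2 * \<nu>) * \<nu> * lmin)"
    using lmin_pos powr_add[of lmin 1 "1/2"] by (simp add: powr_half_sqrt)
  finally show ?thesis using lmin_pos by simp
qed

lemma unit_step_armijo: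
  assumes beta: "0 < \<beta>" "\<beta> < 1/2" and nu_le: "\<nu> \<le> 2/3 * (1/2 - \<beta>)"
    and k_large: "1 \<le> k * (3/2 - \<beta>)"
  shows "f (x + p) \<le> f x + \<beta> * (g x \<bullet> p)"
proof -
  define a Q P where "a = - (g x \<bullet> p)" and "Q = p \<bullet> (H x *v p)" and "P = norm p"
  have a: "0 \<le> a" using norm_sq_le_decrement k_pos lmin_pos a_def
    by (smt (verit) mult_nonneg_nonneg zero_le_power2)
  have P: "0 \<le> P" by (simp add: P_def)
  have "Q \<le> k * (3/2 - \<beta>) * Q"
    using k_large hessian_psd[of p x] by (simp add: Q_def mult_le_cancel_right1)
  also have "\<dots> \<le> (3/2 - \<beta>) * a"
    using mult_right_mono[OF quadratic_le_decrement, of "3/2 - \<beta>"] beta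
    by (simp add: a_def Q_def ac_simps)
  finally have Q_le: "Q \<le> (3/2 - \<beta>) * a" .
  have "k\<^sup>2 * (L * P ^ 3) = (L * k * P) * (k * P\<^sup>2)"
    by (simp add: power2_eq_square power3_eq_cube)
  also have "\<dots> \<le> ((1 + 3/2 * \<nu>) * \<nu> * lmin) * (k * P\<^sup>2)"
    using lipschitz_step_le k_pos by (intro mult_right_mono) (simp_all add: P_def)
  also have "\<dots> = (1 + 3/2 * \<nu>) * \<nu> * (k * lmin * P\<^sup>2)" by simp
  also have "\<dots> \<le> (1 + 3/2 * \<nu>) * \<nu> * a"
    using norm_sq_le_decrement nu_nonneg by (intro mult_left_mono) (simp_all add: a_def P_def)
  also have "\<dots> \<le> (1/2 - \<beta>) * a"
  proof (rule mult_right_mono[OF _ a])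
    have "1 + 3/2 * \<nu> \<le> 3/2" using nu_le beta by simp
    then have "(1 + 3/2 * \<nu>) * \<nu> \<le> 3/2 * \<nu>" using nu_nonneg by (rule mult_right_mono)
    then show "(1 + 3/2 * \<nu>) * \<nu> \<le> 1/2 - \<beta>" using nu_le by simp
  qed
  finally have cubic_le: "k\<^sup>2 * (L * P ^ 3) \<le> (1/2 - \<beta>) * a" .
  have "L * P ^ 3 \<le> (k * (3/2 - \<beta>))\<^sup>2 * (L * P ^ 3)"
    using mult_right_mono[OF one_le_power[OF k_large] mult_nonneg_nonneg[OF lipschitz_const_nonneg]] P
    by simp
  also have "\<dots> = (3/2 - \<beta>)\<^sup>2 * (k\<^sup>2 * (L * P ^ 3))" by (simp add: power_mult_distrib)
  also have "\<dots> \<le> 9/4 * ((1/2 - \<beta>) * a)"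
  proof (rule mult_mono[OF _ cubic_le])
    have "(3/2 - \<beta>)\<^sup>2 \<le> (3/2)\<^sup>2" using beta by (intro power_mono) auto
    then show "(3/2 - \<beta>)\<^sup>2 \<le> 9/4" by (simp add: power2_eq_square)
    show "0 \<le> k\<^sup>2 * (L * P ^ 3)" using lipschitz_const_nonneg P by simp
  qed simp
  finally have "L * P ^ 3 \<le> 9/4 * ((1/2 - \<beta>) * a)" .
  moreover have "f (x + p) \<le> f x - a + Q / 2 + L * P ^ 3 / 6"
    using cubic_upper_bound[of x p] by (simp add: a_def Q_def P_def)
  ultimately have "f (x + p) \<le> f x - a + (3/2 - \<beta>) * a / 2 + 9/4 * ((1/2 - \<beta>) * a) / 6"
    using Q_le by linarith
  also have "\<dots> = f x - a / 16 - 7/8 * (\<beta> * a)" by (simp add: field_simps)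
  also have "\<dots> \<le> f x - \<beta> * a"
    using mult_right_mono[of \<beta> "1/2" a] beta a by linarith
  finally show ?thesis by (simp add: a_def)
qed

end

end

theorem mainTheorem5:
  fixes f :: "real^'n \<Rightarrow> real"
    and g :: "real^'n \<Rightarrow> real^'n"
    and H :: "real^'n \<Rightarrow> real^'n^'n"
    and xs x :: "real^'n"
    and Ht :: "real^'n^'n"
    and lmin lmax L \<beta> \<nu> \<psi> :: real
  assumes grad: "\<And>y. (f has_derivative (\<lambda>h. g y \<bullet> h)) (at y)"
    and hess: "\<And>y. (g has_derivative (\<lambda>h. H y *v h)) (at y)"
    and H_cont: "continuous_on UNIV H"
    and lmin_pos: "0 < lmin" and lmin_le: "lmin \<le> lmax"
    and H_bounds: "\<And>y. loewner_le (lmin *\<^sub>R mat 1) (H y) \<and> loewner_le (H y) (lmax *\<^sub>R mat 1)"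
    and xs_min: "\<And>y. f xs \<le> f y"
    and lipschitz: "\<And>y z. spec_norm (H y - H z) \<le> L * norm (y - z)"
    and beta: "0 < \<beta>" "\<beta> < 1/2"
    and nu: "0 < \<nu>" "\<nu> \<le> 2/3 * (1/2 - \<beta>)"
    and psi: "0 < \<psi>" "\<psi> \<le> (1/2 - \<beta>) / (3/2 - \<beta>)"
    and x_nbhd: "L * anorm (H xs) (x - xs) \<le> \<nu> * lmin powr (3/2)"
    and Ht_sym: "transpose Ht = Ht"
    and Ht_bounds: "loewner_le ((1 - \<psi>) *\<^sub>R H x) Ht" "loewner_le Ht ((1 + \<psi>) *\<^sub>R H x)"
  shows "f (x + (- (matrix_inv Ht *v g x))) \<le> f x + \<beta> * (g x \<bullet> (- (matrix_inv Ht *v g x)))"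
proof -
  interpret strongly_convex_lipschitz_hessian f g H L lmin
    using grad hess lipschitz lmin_pos H_bounds
    by unfold_locales (auto simp: loewner_le_def scaleR_matrix_vector_assoc[symmetric])
  define k where "k = 1 - \<psi>"
  have model_lower: "k * (v \<bullet> (H x *v v)) \<le> v \<bullet> (Ht *v v)" for v
    using Ht_bounds(1) by (auto simp: loewner_le_def k_def scaleR_matrix_vector_assoc[symmetric])
  have k_large: "1 \<le> k * (3/2 - \<beta>)"
    using psi beta by (simp add: k_def field_simps)
  then have k_pos: "0 < k"
    using beta by (intro zero_less_mult_pos2[of k "3/2 - \<beta>"]) auto
  have "0 < v \<bullet> (Ht *v v)" if "v \<noteq> 0" for v
    using k_pos lmin_pos that mult_left_mono[OF hessian_lower[of v x], of k] model_lower[of v]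
    by (smt (verit) inner_gt_zero_iff mult_pos_pos)
  then have "Ht *v (- (matrix_inv Ht *v g x)) = - g x"
    by (simp add: matrix_vector_mul_matrix_inv_pos_def matrix_vector_right_distrib vec.neg)
  from unit_step_armijo[OF gradient_eq_0_at_minimum[OF xs_min] k_pos model_lower this
      less_imp_le[OF nu(1)] x_nbhd beta nu(2) k_large]
  show ?thesis by simp
qed

end
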